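(* Let $S\subset\mathrm{Hom}(\Lambda_H\otimes\mathbb{R},\mathbb{C})$ be the set of central charges \[ Z^{a,b}_{\alpha,\beta} = \left[-e^\beta_3 + b\,e^\beta_2 + a\,e^\beta_1\right] + i\left[e^\beta_2 - \tfrac12\alpha^2 e_0\right] \] for all $\alpha,\beta,a,b\in\mathbb{R}$ with $\alpha>0$ and $a>\frac16\alpha^2+\frac12|b|\alpha$. Then $S\subset\mathfrak{P}$, $S$ is a slice of $\mathfrak{P}$ for the action of $\mathrm{GL}_2^+(\mathbb{R})$ (every $\mathrm{GL}_2^+(\mathbb{R})$-orbit in $\mathfrak{P}$ meets $S$ in exactly one point), and $S$ is simply connected.
   Context: Coordinates $(e_0,e_1,e_2,e_3)$ on $\Lambda_H\otimes\mathbb{R}=\mathbb{R}^4$ (corresponding to $(H^3\mathrm{ch}_0,H^2\mathrm{ch}_1,H\mathrm{ch}_2,\mathrm{ch}_3)$). For $\beta\in\mathbb{R}$ set $e^\beta_1 = e_1-\beta e_0$, $e^\beta_2 = e_2-\beta e_1+\frac{\beta^2}{2}e_0$, $e^\beta_3 = e_3-\beta e_2+\frac{\beta^2}{2}e_1-\frac{\beta^3}{6}e_0$. Let $\mathfrak{C}=\{(x^3,x^2y,\frac12xy^2,\frac16y^3):x,y\in\mathbb{R}\}$, $\mathfrak{V}$ the open set of $\mathbb{R}$-linear $Z\colon\mathbb{R}^4\to\mathbb{C}$ with $\ker Z\cap\mathfrak{C}=\{0\}$, and $\mathfrak{P}$ the connected component of $\mathfrak{V}$ containing $Z^{\mathrm{basic}}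 = (-e_3+\frac12e_1)+i(e_2-\frac16e_0)$. $\mathrm{GL}_2^+(\mathbb{R})$ acts on $\mathfrak{P}$ by post-composition with the induced $\mathbb{R}$-linear map of $\mathbb{R}^2\cong\mathbb{C}$. *)

theory Defs
  imports "HOL-Analysis.Analysis"
begin

text \<open>Lambda_H tensor R = real^4, with coordinates e_0 = v$0, ..., e_3 = v$3.
  Central charges Hom(R^4, C) are the (automatically bounded) linear maps real^4 =>L complex,
  with the operator-norm topology (= the usual topology of this 8-dim real space).\<close>

type_synonym charge = "(real^4) \<Rightarrow>\<^sub>L complex"

definition eb1 :: "real \<Rightarrow> real^4 \<Rightarrow> real" where
  "eb1 \<beta> v = v$1 - \<beta> * v$0"
definition eb2 :: "real \<Rightarrow> real^4 \<Rightarrow> real" where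
  "eb2 \<beta> v = v$2 - \<beta> * v$1 + \<beta>^2/2 * v$0"
definition eb3 :: "real \<Rightarrow> real^4 \<Rightarrow> real" where
  "eb3 \<beta> v = v$3 - \<beta> * v$2 + \<beta>^2/2 * v$1 - \<beta>^3/6 * v$0"

definition twisted_cubic :: "(real^4) set" where
  "twisted_cubic = {v. \<exists>x y::real. v$0 = x^3 \<and> v$1 = x^2*y \<and> v$2 = x*y^2/2 \<and> v$3 = y^3/6}"

definition VV :: "charge set" where
  "VV = {Z. \<forall>v\<in>twisted_cubic. blinfun_apply Z v = 0 \<longrightarrow> v = 0}"

definition Z_basic :: charge where
  "Z_basic = Blinfun (\<lambda>v. Complex (- v$3 + v$1/2) (v$2 - v$0/6))"

definition PP :: "charge set" where
  "PP = connected_component_set VV Z_basic"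

text \<open>GL_2^+(R) as 2x2 real matrices of positive determinant, acting on C = R^2
  (first coordinate Re, second Im).\<close>
definition gl2_act :: "real^2^2 \<Rightarrow> complex \<Rightarrow> complex" where
  "gl2_act g w = Complex (g$1$1 * Re w + g$1$2 * Im w) (g$2$1 * Re w + g$2$2 * Im w)"

definition in_GL2_orbit :: "charge \<Rightarrow> charge \<Rightarrow> bool" where
  "in_GL2_orbit W Z \<longleftrightarrow> (\<exists>g::real^2^2. det g > 0 \<and> (\<forall>v. blinfun_apply W v = gl2_act g (blinfun_apply Z v)))"

definition SS :: "charge set" where
  "SS = {Z. \<exists>\<alpha> \<beta> a b::real. \<alpha> > 0 \<and> a > \<alpha>^2/6 + \<bar>b\<bar>*\<alpha>/2 \<and>
     (\<forall>v. blinfun_apply Z v =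
        Complex (- eb3 \<beta> v + b * eb2 \<beta> v + a * eb1 \<beta> v) (eb2 \<beta> v - \<alpha>^2/2 * v$0))}"

end

theory Submission
  imports Defs
begin

text \<open>
  Along the moment curve \<open>t \<mapsto> (1, t, t\<^sup>2/2, t\<^sup>3/6)\<close>, which together with \<open>e\<^sub>3\<close> spans the
  twisted cubic up to scaling, a charge divided by \<open>-Z(e\<^sub>3)\<close> reads \<open>G(t) + i H(t)\<close> with \<open>G\<close> a real
  cubic of leading coefficient \<open>-1/6\<close> and \<open>H\<close> a real quadratic; for \<open>Z \<in> VV\<close>, \<open>G\<close> and \<open>H\<close> have no
  common zero. Call \<open>Z\<close> interlacing if \<open>G\<close> has roots \<open>u\<^sub>1 < u\<^sub>2 < u\<^sub>3\<close> at which \<open>H\<close> has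
  signs \<open>+, -, +\<close>. Equivalently, \<open>H\<close> has leading coefficient \<open>> 0\<close> and roots \<open>\<beta> \<plusminus> \<alpha>\<close>, and
  \<open>G(\<beta> - \<alpha>) < 0 < G(\<beta> + \<alpha>)\<close>; so the interlacing charges form an open set. They also form a
  closed subset of \<open>VV\<close>: the roots of \<open>G\<close> stay bounded along a convergent sequence, and in the
  limit the sign conditions can only degenerate at common zeros of \<open>G\<close> and \<open>H\<close>. As they contain
  \<open>Z_basic\<close>, they contain \<open>PP\<close>.

  An interlacing charge is moved into \<open>SS\<close> by multiplying with \<open>-1/Z(e\<^sub>3)\<close>, scaling \<open>H\<close> to
  \<open>((t - \<beta>)\<^sup>2 - \<alpha>\<^sup>2)/2\<close> and adding to \<open>G\<close> the multiple of \<open>H\<close> that matches the slice; the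
  inequality \<open>a > \<alpha>\<^sup>2/6 + |b|\<alpha>/2\<close> is exactly the sign condition on \<open>G(\<beta> \<plusminus> \<alpha>)\<close>. Comparing
  values on the basis vectors shows that an element of \<open>GL\<^sub>2\<^sup>+(\<real>)\<close> taking a point of \<open>SS\<close>
  into \<open>SS\<close> fixes it. Finally, in the coordinates \<open>(\<alpha>, \<beta>, a - \<alpha>\<^sup>2/6 - |b|\<alpha>/2, b)\<close> the slice is the convex
  set \<open>(0,\<infinity>) \<times> \<real> \<times> (0,\<infinity>) \<times> \<real>\<close>, hence simply connected.
\<close>

section \<open>The slice\<close>

lemma four_eq_zero: "(4::4) = 0"
  by simp

lemma vec4_eqI:
  fixes v w :: "real^4"
  shows "v$0 = w$0 \<Longrightarrow> v$1 = w$1 \<Longrightarrow> v$2 = w$2 \<Longrightarrow> v$3 = w$3 \<Longrightarrow> v = w"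
  unfolding vec_eq_iff forall_4 four_eq_zero by simp

definition slice_charge :: "real \<Rightarrow> real \<Rightarrow> real \<Rightarrow> real \<Rightarrow> charge" where
  "slice_charge \<alpha> \<beta> a b = Blinfun (\<lambda>v. Complex (- eb3 \<beta> v + b * eb2 \<beta> v + a * eb1 \<beta> v) (eb2 \<beta> v - \<alpha>^2/2 * v$0))"

lemma slice_charge_apply:
  "slice_charge \<alpha> \<beta> a b v = Complex (- eb3 \<beta> v + b * eb2 \<beta> v + a * eb1 \<beta> v) (eb2 \<beta> v - \<alpha>^2/2 * v$0)"
proof -
  have "linear (\<lambda>v. Complex (- eb3 \<beta> v + b * eb2 \<beta> v + a * eb1 \<beta> v) (eb2 \<beta> v - \<alpha>^2/2 * v$0))"
    by (rule linearI) (simp_all add: complex_eq_iff eb1_def eb2_def eb3_def field_simps)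
  then show ?thesis
    by (simp add: slice_charge_def linear_conv_bounded_linear bounded_linear_Blinfun_apply)
qed

lemma slice_charge_axis:
  "slice_charge \<alpha> \<beta> a b (axis 0 1) = Complex (\<beta>^3/6 + b*\<beta>^2/2 - a*\<beta>) (\<beta>^2/2 - \<alpha>^2/2)"
  "slice_charge \<alpha> \<beta> a b (axis 1 1) = Complex (a - b*\<beta> - \<beta>^2/2) (-\<beta>)"
  "slice_charge \<alpha> \<beta> a b (axis 2 1) = Complex (\<beta> + b) 1"
  "slice_charge \<alpha> \<beta> a b (axis 3 1) = Complex (-1) 0"
  by (simp_all add: slice_charge_apply eb1_def eb2_def eb3_def axis_def complex_eq_iff field_simps)

lemma SS_eq: "SS = {slice_charge \<alpha> \<beta> a b |\<alpha> \<beta> a b. \<alpha> > 0 \<and> a > \<alpha>^2/6 + \<bar>b\<bar>*\<alpha>/2}"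
proof -
  have "(\<forall>v. Z v = Complex (- eb3 \<beta> v + b * eb2 \<beta> v + a * eb1 \<beta> v) (eb2 \<beta> v - \<alpha>^2/2 * v$0))
      \<longleftrightarrow> Z = slice_charge \<alpha> \<beta> a b" for Z :: charge and \<alpha> \<beta> a b
    by (auto simp: slice_charge_apply intro: blinfun_eqI)
  then show ?thesis
    unfolding SS_def by auto
qed

lemma slice_charge_in_SS: "\<alpha> > 0 \<Longrightarrow> a > \<alpha>^2/6 + \<bar>b\<bar>*\<alpha>/2 \<Longrightarrow> slice_charge \<alpha> \<beta> a b \<in> SS"
  unfolding SS_eq by blast

lemma Z_basic_eq: "Z_basic = slice_charge (sqrt (1/3)) 0 (1/2) 0"
proof -
  have "linear (\<lambda>v::real^4. Complex (- v$3 + v$1/2) (v$2 - v$0/6))"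
    by (rule linearI) (simp_all add: complex_eq_iff algebra_simps)
  then show ?thesis
    unfolding Z_basic_def
    by (intro blinfun_eqI) (simp add: linear_conv_bounded_linear bounded_linear_Blinfun_apply
        slice_charge_apply eb1_def eb2_def eb3_def)
qed

lemma Z_basic_in_SS: "Z_basic \<in> SS"
proof -
  have "sqrt (1/3) ^ 2 = (1/3 :: real)"
    by (simp add: power2_eq_square)
  then show ?thesis
    unfolding Z_basic_eq by (intro slice_charge_in_SS) auto
qed

lemma slice_charge_in_VV:
  assumes \<alpha>: "\<alpha> > 0" and a: "a > \<alpha>^2/6 + \<bar>b\<bar>*\<alpha>/2"
  shows "slice_charge \<alpha> \<beta> a b \<in> VV"
  unfolding VV_def
proof (intro CollectI ballI impI)
  fix v assume "v \<in> twisted_cubic" and zero: "slice_charge \<alpha> \<beta> a b v = 0"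
  then obtain x y where v: "v$0 = x^3" "v$1 = x^2*y" "v$2 = x*y^2/2" "v$3 = y^3/6"
    unfolding twisted_cubic_def by blast
  define s where "s = y - \<beta>*x"
  have e: "eb1 \<beta> v = x^2 * s" "eb2 \<beta> v = x * s^2 / 2" "eb3 \<beta> v = s^3 / 6"
    by (simp_all add: eb1_def eb2_def eb3_def v s_def power2_eq_square power3_eq_cube field_simps)
  have re: "s * (a * x^2 + b * x * s / 2 - s^2 / 6) = 0"
    using arg_cong[OF zero, of Re] by (simp add: slice_charge_apply e power2_eq_square power3_eq_cube algebra_simps)
  have im: "x * (s^2 - (\<alpha> * x)^2) = 0"
    using arg_cong[OF zero, of Im] by (simp add: slice_charge_apply e v power2_eq_square power3_eq_cube algebra_simps)
  have b\<alpha>: "\<bar>b * \<alpha>\<bar> = \<bar>b\<bar> * \<alpha>"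
    using \<alpha> by (simp add: abs_mult)
  have "x = 0"
  proof (rule ccontr)
    assume "x \<noteq> 0"
    with im have "s = \<alpha> * x \<or> s = - (\<alpha> * x)"
      by (simp add: power2_eq_iff)
    then show False
    proof
      assume "s = \<alpha> * x"
      then have "\<alpha> * x^3 * (a - \<alpha>^2/6 + b * \<alpha> / 2) = 0"
        using re by (simp add: power2_eq_square power3_eq_cube algebra_simps)
      moreover have "a - \<alpha>^2/6 + b * \<alpha> / 2 > 0"
        using a b\<alpha> abs_ge_minus_self[of "b * \<alpha>"] by linarith
      ultimately show False
        using \<open>x \<noteq> 0\<close> \<alpha> by simp
    next
      assume "s = - (\<alpha> * x)"
      then have "\<alpha> * x^3 * (a - \<alpha>^2/6 - b * \<alpha> / 2) = 0"
        using re by (simp add: power2_eq_square power3_eq_cube algebra_simps)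
      moreover have "a - \<alpha>^2/6 - b * \<alpha> / 2 > 0"
        using a b\<alpha> abs_ge_self[of "b * \<alpha>"] by linarith
      ultimately show False
        using \<open>x \<noteq> 0\<close> \<alpha> by simp
    qed
  qed
  moreover have "y = 0"
    using re \<open>x = 0\<close> by (simp add: s_def)
  ultimately show "v = 0"
    by (intro vec4_eqI) (simp_all add: v)
qed

lemma SS_subset_VV: "SS \<subseteq> VV"
  unfolding SS_eq using slice_charge_in_VV by blast

section \<open>Simple connectivity of the slice\<close>

definition slice_chart :: "real \<times> real \<times> real \<times> real \<Rightarrow> charge" where
  "slice_chart = (\<lambda>(\<alpha>, \<beta>, \<epsilon>, b). slice_charge \<alpha> \<beta> (\<alpha>^2/6 + \<bar>b\<bar>*\<alpha>/2 + \<epsilon>) b)"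

definition slice_coords :: "charge \<Rightarrow> real \<times> real \<times> real \<times> real" where
  "slice_coords W =
    (let \<beta> = - Im (W (axis 1 1)); b = Re (W (axis 2 1)) - \<beta>;
         \<alpha> = sqrt (\<beta>^2 - 2 * Im (W (axis 0 1))); a = Re (W (axis 1 1)) + b*\<beta> + \<beta>^2/2
     in (\<alpha>, \<beta>, a - \<alpha>^2/6 - \<bar>b\<bar>*\<alpha>/2, b))"

lemma slice_coords_slice_charge:
  assumes "\<alpha> > 0"
  shows "slice_coords (slice_charge \<alpha> \<beta> a b) = (\<alpha>, \<beta>, a - \<alpha>^2/6 - \<bar>b\<bar>*\<alpha>/2, b)"
proof -
  have "sqrt (\<beta>^2 - 2 * (\<beta>^2/2 - \<alpha>^2/2)) = \<alpha>"
    using assms by simp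
  then show ?thesis
    unfolding slice_coords_def Let_def slice_charge_axis complex.sel minus_minus
    by (simp add: algebra_simps)
qed

lemma slice_chart_image: "slice_chart ` ({0<..} \<times> UNIV \<times> {0<..} \<times> UNIV) = SS"
proof -
  have "slice_charge \<alpha> \<beta> a b \<in> slice_chart ` ({0<..} \<times> UNIV \<times> {0<..} \<times> UNIV)"
    if "\<alpha> > 0" "a > \<alpha>^2/6 + \<bar>b\<bar>*\<alpha>/2" for \<alpha> \<beta> a b
    using that by (intro image_eqI[of _ _ "(\<alpha>, \<beta>, a - \<alpha>^2/6 - \<bar>b\<bar>*\<alpha>/2, b)"]) (auto simp: slice_chart_def)
  moreover have "slice_chart p \<in> SS" if "p \<in> {0<..} \<times> UNIV \<times> {0<..} \<times> UNIV" for p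
    using that by (auto simp: slice_chart_def intro!: slice_charge_in_SS)
  ultimately show ?thesis
    unfolding SS_eq by blast
qed

lemma continuous_on_slice_chart: "continuous_on S slice_chart"
proof (rule continuous_on_blinfun_componentwise)
  fix v :: "real^4"
  show "continuous_on S (\<lambda>p. slice_chart p v)"
    unfolding slice_chart_def case_prod_beta slice_charge_apply eb1_def eb2_def eb3_def
    by (intro continuous_intros) auto
qed

lemma continuous_on_blinfun_apply_const [continuous_intros]:
  "continuous_on S (\<lambda>W :: 'a::real_normed_vector \<Rightarrow>\<^sub>L 'b::real_normed_vector. W x)"
  by (intro blinfun.continuous_on continuous_intros)

lemma continuous_on_slice_coords: "continuous_on S slice_coords"
  unfolding slice_coords_def Let_def
  by (intro continuous_intros continuous_on_compose2[OF continuous_on_real_sqrt]) auto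

lemma simply_connected_SS: "simply_connected SS"
proof (rule simply_connected_retraction_gen)
  let ?P = "{0<..} \<times> UNIV \<times> {0<..} \<times> UNIV :: (real \<times> real \<times> real \<times> real) set"
  show "simply_connected ?P"
    by (rule convex_imp_simply_connected) (intro convex_Times convex_UNIV convex_real_interval)
  show "slice_chart ` ?P = SS"
    by (rule slice_chart_image)
  show "slice_coords \<in> SS \<rightarrow> ?P"
    unfolding SS_eq by (auto simp: slice_coords_slice_charge)
  show "slice_chart (slice_coords W) = W" if "W \<in> SS" for W
    using that unfolding SS_eq by (auto simp: slice_coords_slice_charge slice_chart_def)
qed (auto intro: continuous_on_slice_chart continuous_on_slice_coords)

section \<open>The action of \<open>GL\<^sub>2\<^sup>+(\<real>)\<close>\<close>

definition gl2_matrix :: "real \<Rightarrow> real \<Rightarrow> real \<Rightarrow> real \<Rightarrow> real^2^2" where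
  "gl2_matrix a b c d = vector [vector [a, b], vector [c, d]]"

lemma det_gl2_matrix: "det (gl2_matrix a b c d) = a * d - b * c"
  by (simp add: gl2_matrix_def det_2)

lemma gl2_act_gl2_matrix: "gl2_act (gl2_matrix a b c d) w = Complex (a * Re w + b * Im w) (c * Re w + d * Im w)"
  by (simp add: gl2_matrix_def gl2_act_def)

lemma gl2_matrix_eta: "g = gl2_matrix (g$1$1) (g$1$2) (g$2$1) (g$2$2)"
  by (simp add: gl2_matrix_def vec_eq_iff forall_2)

lemma gl2_act_mult: "gl2_act (g ** h) w = gl2_act g (gl2_act h w)"
  by (simp add: gl2_act_def matrix_matrix_mult_def sum_2 algebra_simps)

lemma gl2_act_complex_mult: "gl2_act (gl2_matrix (Re c) (- Im c) (Im c) (Re c)) w = c * w"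
  by (simp add: gl2_act_gl2_matrix complex_eq_iff)

lemma det_gl2_complex_mult: "c \<noteq> 0 \<Longrightarrow> det (gl2_matrix (Re c) (- Im c) (Im c) (Re c)) > 0"
  by (simp add: det_gl2_matrix complex_eq_iff sum_power2_gt_zero_iff flip: power2_eq_square)

lemma gl2_act_one: "gl2_act (mat 1) w = w"
  by (simp add: gl2_act_def mat_def complex_eq_iff)

lemma in_GL2_orbit_sym:
  assumes "in_GL2_orbit W Z"
  shows "in_GL2_orbit Z W"
proof -
  obtain g where g: "det g > 0" "\<And>v. W v = gl2_act g (Z v)"
    using assms unfolding in_GL2_orbit_def by blast
  then obtain h where h: "h ** g = mat 1"
    using invertible_det_nz[of g] unfolding invertible_def by auto
  then have "det h * det g = 1"
    by (metis det_I det_mul)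
  then have "det h > 0"
    using g(1) by (metis zero_less_mult_pos2 zero_less_one)
  moreover have "Z v = gl2_act h (W v)" for v
    by (simp add: g(2) h flip: gl2_act_mult) (simp add: gl2_act_one)
  ultimately show ?thesis
    unfolding in_GL2_orbit_def by blast
qed

lemma in_GL2_orbit_trans:
  assumes "in_GL2_orbit W Y" and "in_GL2_orbit Y Z"
  shows "in_GL2_orbit W Z"
proof -
  obtain g h where "det g > 0" "\<And>v. W v = gl2_act g (Y v)" "det h > 0" "\<And>v. Y v = gl2_act h (Z v)"
    using assms unfolding in_GL2_orbit_def by blast
  then show ?thesis
    unfolding in_GL2_orbit_def by (intro exI[of _ "g ** h"]) (simp add: det_mul gl2_act_mult)
qed

lemma SS_orbit_rigid:
  assumes W1: "W1 \<in> SS" and W2: "W2 \<in> SS" and orbit: "in_GL2_orbit W2 W1"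
  shows "W1 = W2"
proof -
  obtain \<alpha>1 \<beta>1 a1 b1 where P1: "W1 = slice_charge \<alpha>1 \<beta>1 a1 b1" "\<alpha>1 > 0"
    using W1 unfolding SS_eq by blast
  obtain \<alpha>2 \<beta>2 a2 b2 where P2: "W2 = slice_charge \<alpha>2 \<beta>2 a2 b2" "\<alpha>2 > 0"
    using W2 unfolding SS_eq by blast
  obtain p q r s where det: "p * s - q * r > 0"
    and act: "\<And>v. W2 v = gl2_act (gl2_matrix p q r s) (W1 v)"
    using orbit unfolding in_GL2_orbit_def by (metis gl2_matrix_eta det_gl2_matrix)
  note eq = act[unfolded P1 P2 gl2_act_gl2_matrix complex_eq_iff]
  have pr: "p = 1" "r = 0"
    using eq[of "axis 3 1"] by (simp_all add: slice_charge_axis)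
  have sq: "s = 1" "q = \<beta>2 + b2 - \<beta>1 - b1"
    using eq[of "axis 2 1"] pr by (simp_all add: slice_charge_axis)
  have \<beta>: "\<beta>2 = \<beta>1"
    using eq[of "axis 1 1"] pr sq by (simp add: slice_charge_axis)
  have b: "b2 = b1 + q"
    using sq \<beta> by simp
  have a: "a2 = a1"
    using eq[of "axis 1 1"] pr sq(1) \<beta> b by (simp add: slice_charge_axis algebra_simps)
  have "\<alpha>2^2 = \<alpha>1^2"
    using eq[of "axis 0 1"] pr sq \<beta> by (simp add: slice_charge_axis)
  then have \<alpha>: "\<alpha>2 = \<alpha>1"
    using P1(2) P2(2) by (simp add: power2_eq_iff_nonneg)
  have "q * \<alpha>1^2 = 0"
    using eq[of "axis 0 1"] pr sq(1) \<alpha> \<beta> a b by (simp add: slice_charge_axis field_simps)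
  then have "q = 0"
    using P1(2) by simp
  then show ?thesis
    using P1 P2 \<alpha> \<beta> a b by simp
qed

lemma SS_orbit_unique:
  assumes "W1 \<in> SS" "W2 \<in> SS" "in_GL2_orbit W1 Z" "in_GL2_orbit W2 Z"
  shows "W1 = W2"
  using assms SS_orbit_rigid in_GL2_orbit_sym in_GL2_orbit_trans by metis

section \<open>Interlacing of a cubic and a quadratic\<close>

definition cubic_poly :: "real \<Rightarrow> real \<Rightarrow> real \<Rightarrow> real \<Rightarrow> real" where
  "cubic_poly r0 r1 r2 t = r0 + r1 * t + r2 * t^2/2 - t^3/6"

definition quadratic_poly :: "real \<Rightarrow> real \<Rightarrow> real \<Rightarrow> real \<Rightarrow> real" where
  "quadratic_poly k0 k1 k2 t = k0 + k1 * t + k2 * t^2/2"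

definition interlaced :: "(real \<Rightarrow> real) \<Rightarrow> (real \<Rightarrow> real) \<Rightarrow> bool" where
  "interlaced G H \<longleftrightarrow> (\<exists>u1 u2 u3. u1 < u2 \<and> u2 < u3 \<and> G u1 = 0 \<and> G u2 = 0 \<and> G u3 = 0 \<and>
     H u1 > 0 \<and> H u2 < 0 \<and> H u3 > 0)"

definition cubic_root_bound :: "real \<Rightarrow> real \<Rightarrow> real \<Rightarrow> real" where
  "cubic_root_bound r0 r1 r2 = 1 + 6 * (\<bar>r0\<bar> + \<bar>r1\<bar> + \<bar>r2\<bar>)"

lemma cubic_root_bound_ge_1: "1 \<le> cubic_root_bound r0 r1 r2"
  by (simp add: cubic_root_bound_def)

lemma cubic_poly_lower_terms_small:
  assumes t: "cubic_root_bound r0 r1 r2 \<le> \<bar>t\<bar>"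
  shows "\<bar>r0 + r1 * t + r2 * t^2/2\<bar> < \<bar>t\<bar>^3/6"
proof -
  have t1: "1 \<le> \<bar>t\<bar>"
    using t cubic_root_bound_ge_1 order_trans by blast
  have tK: "6 * (\<bar>r0\<bar> + \<bar>r1\<bar> + \<bar>r2\<bar>) < \<bar>t\<bar>"
    using t unfolding cubic_root_bound_def by simp
  have tt: "\<bar>t\<bar> \<le> t^2"
    using mult_left_mono[OF t1 abs_ge_zero[of t]] by (simp add: power2_eq_square abs_mult_self_eq)
  have "\<bar>r0 + r1 * t + r2 * t^2/2\<bar> \<le> \<bar>r0\<bar> + \<bar>r1\<bar> * \<bar>t\<bar> + \<bar>r2\<bar> * t^2/2"
    by (rule order.trans[OF abs_triangle_ineq]) (simp add: abs_mult order.trans[OF abs_triangle_ineq])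
  also have "\<dots> \<le> (\<bar>r0\<bar> + \<bar>r1\<bar> + \<bar>r2\<bar>) * t^2"
  proof -
    have "\<bar>r0\<bar> \<le> \<bar>r0\<bar> * t^2"
      using t1 tt by (simp add: mult_le_cancel_left1)
    moreover have "\<bar>r1\<bar> * \<bar>t\<bar> \<le> \<bar>r1\<bar> * t^2"
      using tt by (simp add: mult_left_mono)
    moreover have "\<bar>r2\<bar> * t^2/2 \<le> \<bar>r2\<bar> * t^2"
      by simp
    ultimately show ?thesis
      unfolding distrib_right by linarith
  qed
  also have "\<dots> < \<bar>t\<bar>/6 * t^2"
    using tK t1 by (intro mult_strict_right_mono) auto
  also have "\<dots> = \<bar>t\<bar>^3/6"
    by (simp add: power2_eq_square power3_eq_cube)
  finally show ?thesis .
qed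

lemma cubic_poly_neg_large:
  assumes "cubic_root_bound r0 r1 r2 \<le> t"
  shows "cubic_poly r0 r1 r2 t < 0"
proof -
  have "\<bar>t\<bar> = t"
    using assms cubic_root_bound_ge_1[of r0 r1 r2] by simp
  then show ?thesis
    using assms cubic_poly_lower_terms_small[of r0 r1 r2 t] abs_ge_self[of "r0 + r1 * t + r2 * t^2/2"]
    unfolding cubic_poly_def by simp
qed

lemma cubic_poly_pos_small:
  assumes "t \<le> - cubic_root_bound r0 r1 r2"
  shows "cubic_poly r0 r1 r2 t > 0"
proof -
  have "\<bar>t\<bar> = - t"
    using assms cubic_root_bound_ge_1[of r0 r1 r2] by simp
  then have "cubic_root_bound r0 r1 r2 \<le> \<bar>t\<bar>" "(\<bar>t\<bar>)^3 = - (t^3)"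
    using assms by (simp_all add: power3_eq_cube)
  then show ?thesis
    using cubic_poly_lower_terms_small[of r0 r1 r2 t] abs_ge_minus_self[of "r0 + r1 * t + r2 * t^2/2"]
    unfolding cubic_poly_def by simp
qed

lemma cubic_poly_root_bound: "cubic_poly r0 r1 r2 t = 0 \<Longrightarrow> \<bar>t\<bar> < cubic_root_bound r0 r1 r2"
  using cubic_poly_neg_large[of r0 r1 r2 t] cubic_poly_pos_small[of t r0 r1 r2] by linarith

lemma continuous_on_cubic_poly [continuous_intros]:
  "continuous_on A a \<Longrightarrow> continuous_on A b \<Longrightarrow> continuous_on A c \<Longrightarrow> continuous_on A f \<Longrightarrow>
    continuous_on A (\<lambda>x. cubic_poly (a x) (b x) (c x) (f x))"
  unfolding cubic_poly_def by (intro continuous_intros) auto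

definition quadratic_vertex :: "real \<Rightarrow> real \<Rightarrow> real" where
  "quadratic_vertex k1 k2 = - k1 / k2"

definition quadratic_radius :: "real \<Rightarrow> real \<Rightarrow> real \<Rightarrow> real" where
  "quadratic_radius k0 k1 k2 = sqrt (k1^2 - 2*k2*k0) / k2"

lemma quadratic_poly_vertex_form:
  assumes "k2 > 0" and "k1^2 - 2*k2*k0 \<ge> 0"
  shows "quadratic_poly k0 k1 k2 t
    = k2/2 * ((t - quadratic_vertex k1 k2)^2 - quadratic_radius k0 k1 k2 ^ 2)"
  using assms by (simp add: quadratic_poly_def quadratic_vertex_def quadratic_radius_def
      power_divide power2_eq_square field_simps)

lemma quadratic_poly_sign:
  assumes "k2 > 0" and "k1^2 - 2*k2*k0 \<ge> 0"
  shows "quadratic_poly k0 k1 k2 t > 0 \<longleftrightarrow> quadratic_radius k0 k1 k2 < \<bar>t - quadratic_vertex k1 k2\<bar>"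
    and "quadratic_poly k0 k1 k2 t < 0 \<longleftrightarrow> \<bar>t - quadratic_vertex k1 k2\<bar> < quadratic_radius k0 k1 k2"
proof -
  define \<rho> where "\<rho> = quadratic_radius k0 k1 k2"
  have "\<rho> \<ge> 0"
    using assms by (simp add: \<rho>_def quadratic_radius_def)
  then have sq: "\<rho> < \<bar>x\<bar> \<longleftrightarrow> \<rho>^2 < x^2" "\<bar>x\<bar> < \<rho> \<longleftrightarrow> x^2 < \<rho>^2" for x
    using abs_le_square_iff[of x \<rho>] abs_le_square_iff[of \<rho> x] by (metis abs_of_nonneg not_le)+
  show "quadratic_poly k0 k1 k2 t > 0 \<longleftrightarrow> quadratic_radius k0 k1 k2 < \<bar>t - quadratic_vertex k1 k2\<bar>"
    and "quadratic_poly k0 k1 k2 t < 0 \<longleftrightarrow> \<bar>t - quadratic_vertex k1 k2\<bar> < quadratic_radius k0 k1 k2"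
    using assms unfolding \<rho>_def[symmetric] sq
    by (simp_all add: quadratic_poly_vertex_form \<rho>_def zero_less_mult_iff mult_less_0_iff)
qed

lemma interlacedI_vertex:
  assumes k2: "k2 > 0" and disc: "k1^2 - 2*k2*k0 > 0"
    and lo: "cubic_poly r0 r1 r2 (quadratic_vertex k1 k2 - quadratic_radius k0 k1 k2) < 0"
    and hi: "cubic_poly r0 r1 r2 (quadratic_vertex k1 k2 + quadratic_radius k0 k1 k2) > 0"
  shows "interlaced (cubic_poly r0 r1 r2) (quadratic_poly k0 k1 k2)"
proof -
  define G where "G = cubic_poly r0 r1 r2"
  define \<beta> where "\<beta> = quadratic_vertex k1 k2"
  define \<rho> where "\<rho> = quadratic_radius k0 k1 k2"
  define M where "M = cubic_root_bound r0 r1 r2 + \<bar>\<beta>\<bar> + \<rho>"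
  have \<rho>: "\<rho> > 0"
    using k2 disc by (simp add: \<rho>_def quadratic_radius_def)
  have M: "M \<ge> cubic_root_bound r0 r1 r2" "- M < \<beta> - \<rho>" "\<beta> + \<rho> < M"
    using \<rho> cubic_root_bound_ge_1[of r0 r1 r2] by (auto simp: M_def)
  have cont: "continuous_on A G" for A
    unfolding G_def by (intro continuous_intros)
  obtain u1 where u1: "- M \<le> u1" "u1 \<le> \<beta> - \<rho>" "G u1 = 0"
    using IVT2'[of G "\<beta> - \<rho>" 0 "- M"] lo cubic_poly_pos_small[of "- M"] M cont
    unfolding G_def \<beta>_def \<rho>_def by force
  obtain u2 where u2: "\<beta> - \<rho> \<le> u2" "u2 \<le> \<beta> + \<rho>" "G u2 = 0"
    using IVT'[of G "\<beta> - \<rho>" 0 "\<beta> + \<rho>"] lo hi \<rho> cont unfolding G_def \<beta>_def \<rho>_def by force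
  obtain u3 where u3: "\<beta> + \<rho> \<le> u3" "u3 \<le> M" "G u3 = 0"
    using IVT2'[of G M 0 "\<beta> + \<rho>"] hi cubic_poly_neg_large[of r0 r1 r2 M] M cont
    unfolding G_def \<beta>_def \<rho>_def by force
  have "u1 \<noteq> \<beta> - \<rho>" "u2 \<noteq> \<beta> - \<rho>" "u2 \<noteq> \<beta> + \<rho>" "u3 \<noteq> \<beta> + \<rho>"
    using u1(3) u2(3) u3(3) lo hi by (auto simp: G_def \<beta>_def \<rho>_def)
  then have "u1 < u2" "u2 < u3" "\<rho> < \<bar>u1 - \<beta>\<bar>" "\<bar>u2 - \<beta>\<bar> < \<rho>" "\<rho> < \<bar>u3 - \<beta>\<bar>"
    using u1 u2 u3 by auto
  then show ?thesis
    unfolding interlaced_def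
    using u1(3) u2(3) u3(3) quadratic_poly_sign[OF k2 less_imp_le[OF disc]]
    by (auto simp: G_def \<beta>_def \<rho>_def)
qed

lemma quadratic_eq_0_of_three_roots:
  fixes a b c x y z :: real
  assumes "x \<noteq> y" "x \<noteq> z" "y \<noteq> z"
    and "a + b*x + c*x^2 = 0" "a + b*y + c*y^2 = 0" "a + b*z + c*z^2 = 0"
  shows "a = 0 \<and> b = 0 \<and> c = 0"
proof -
  have "(x - y) * (b + c*(x + y)) = 0" "(x - z) * (b + c*(x + z)) = 0"
    using assms(4-6) by (simp_all add: power2_eq_square algebra_simps)
  then have xy: "b + c*(x + y) = 0" and xz: "b + c*(x + z) = 0"
    using assms(1,2) by simp_all
  have "c * (y - z) = (b + c*(x + y)) - (b + c*(x + z))"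
    by (simp add: algebra_simps)
  then have "c * (y - z) = 0"
    using xy xz by simp
  then have "c = 0"
    using assms(3) by simp
  then show ?thesis
    using xy assms(4) by simp
qed

lemma cubic_poly_three_roots:
  assumes "u1 < u2" "u2 < u3"
    and "cubic_poly r0 r1 r2 u1 = 0" "cubic_poly r0 r1 r2 u2 = 0" "cubic_poly r0 r1 r2 u3 = 0"
  shows "cubic_poly r0 r1 r2 t = - ((t - u1) * (t - u2) * (t - u3)) / 6"
proof -
  define e1 e2 e3 where "e1 = u1 + u2 + u3" and "e2 = u1*u2 + u1*u3 + u2*u3" and "e3 = u1*u2*u3"
  \<comment> \<open>the difference of the two sides is a quadratic vanishing at \<open>u1, u2, u3\<close>\<close>
  have diff: "cubic_poly r0 r1 r2 t + (t - u1) * (t - u2) * (t - u3) / 6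
      = (r0 - e3/6) + (r1 + e2/6) * t + (r2/2 - e1/6) * t^2" for t
    by (simp add: cubic_poly_def e1_def e2_def e3_def power2_eq_square power3_eq_cube field_simps)
  have "r0 - e3/6 = 0 \<and> r1 + e2/6 = 0 \<and> r2/2 - e1/6 = 0"
    by (rule quadratic_eq_0_of_three_roots[of u1 u2 u3])
      (use assms diff[of u1] diff[of u2] diff[of u3] in auto)
  then show ?thesis
    using diff[of t] by (simp add: field_simps)
qed

lemma quadratic_poly_pos_neg_pos:
  assumes u: "u1 < u2" "u2 < u3"
    and H: "quadratic_poly k0 k1 k2 u1 > 0" "quadratic_poly k0 k1 k2 u2 < 0" "quadratic_poly k0 k1 k2 u3 > 0"
  shows "k2 > 0" and "k1^2 - 2*k2*k0 > 0"
proof -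
  define H where "H = quadratic_poly k0 k1 k2"
  \<comment> \<open>a second divided difference of \<open>H\<close> is \<open>k2/2\<close>\<close>
  have "(u3-u2) * H u1 + (u2-u1) * H u3 - (u3-u1) * H u2 = k2/2 * ((u2-u1) * (u3-u2) * (u3-u1))"
    by (simp add: H_def quadratic_poly_def power2_eq_square field_simps)
  moreover have "(u3-u2) * H u1 > 0" "(u2-u1) * H u3 > 0" "(u3-u1) * H u2 < 0"
    using u H by (simp_all add: H_def mult_pos_neg)
  ultimately have "k2/2 * ((u2-u1) * (u3-u2) * (u3-u1)) > 0"
    by linarith
  moreover have "(u2-u1) * (u3-u2) * (u3-u1) > 0"
    using u by simp
  ultimately show k2: "k2 > 0"
    using zero_less_mult_pos2 by fastforce
  have "2*k2 * H u2 = (k2*u2 + k1)^2 - (k1^2 - 2*k2*k0)"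
    by (simp add: H_def quadratic_poly_def power2_eq_square field_simps)
  moreover have "2*k2 * H u2 < 0"
    using k2 H by (simp add: H_def mult_pos_neg)
  ultimately show "k1^2 - 2*k2*k0 > 0"
    by (smt (verit) zero_le_power2)
qed

lemma interlaced_imp_vertex:
  assumes "interlaced (cubic_poly r0 r1 r2) (quadratic_poly k0 k1 k2)"
  shows "k2 > 0" and "k1^2 - 2*k2*k0 > 0"
    and "cubic_poly r0 r1 r2 (quadratic_vertex k1 k2 - quadratic_radius k0 k1 k2) < 0"
    and "cubic_poly r0 r1 r2 (quadratic_vertex k1 k2 + quadratic_radius k0 k1 k2) > 0"
proof -
  define H \<beta> \<rho> where "H = quadratic_poly k0 k1 k2" and "\<beta> = quadratic_vertex k1 k2"
    and "\<rho> = quadratic_radius k0 k1 k2"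
  obtain u1 u2 u3 where u: "u1 < u2" "u2 < u3"
    and G: "cubic_poly r0 r1 r2 u1 = 0" "cubic_poly r0 r1 r2 u2 = 0" "cubic_poly r0 r1 r2 u3 = 0"
    and H: "H u1 > 0" "H u2 < 0" "H u3 > 0"
    using assms unfolding interlaced_def H_def by blast
  show k2: "k2 > 0" and disc: "k1^2 - 2*k2*k0 > 0"
    using quadratic_poly_pos_neg_pos[OF u H[unfolded H_def]] by simp_all
  have sign: "H t > 0 \<longleftrightarrow> \<rho> < \<bar>t - \<beta>\<bar>" "H t < 0 \<longleftrightarrow> \<bar>t - \<beta>\<bar> < \<rho>" for t
    using quadratic_poly_sign[OF k2 less_imp_le[OF disc]] by (simp_all add: H_def \<beta>_def \<rho>_def)
  have "\<beta> - \<rho> < u2" "u2 < \<beta> + \<rho>"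
    using H(2) sign(2) by auto
  moreover have "u1 < \<beta> - \<rho>" "\<beta> + \<rho> < u3"
    using H(1,3) sign(1) u calculation by (auto simp: abs_if split: if_splits)
  ultimately have "(\<beta> - \<rho> - u1) * (\<beta> - \<rho> - u2) * (\<beta> - \<rho> - u3) > 0"
    and "(\<beta> + \<rho> - u1) * (\<beta> + \<rho> - u2) * (\<beta> + \<rho> - u3) < 0"
    using u by (simp_all add: mult_pos_neg mult_neg_neg mult_pos_pos mult_neg_pos)
  then show "cubic_poly r0 r1 r2 (quadratic_vertex k1 k2 - quadratic_radius k0 k1 k2) < 0"
    and "cubic_poly r0 r1 r2 (quadratic_vertex k1 k2 + quadratic_radius k0 k1 k2) > 0"
    unfolding cubic_poly_three_roots[OF u G] \<beta>_def \<rho>_def by simp_all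
qed

lemma interlaced_iff_vertex:
  "interlaced (cubic_poly r0 r1 r2) (quadratic_poly k0 k1 k2) \<longleftrightarrow>
     k2 > 0 \<and> k1^2 - 2*k2*k0 > 0 \<and>
     cubic_poly r0 r1 r2 (quadratic_vertex k1 k2 - quadratic_radius k0 k1 k2) < 0 \<and>
     cubic_poly r0 r1 r2 (quadratic_vertex k1 k2 + quadratic_radius k0 k1 k2) > 0"
  by (metis interlaced_imp_vertex interlacedI_vertex)

lemma quadratic_coeffs_vertex:
  assumes "k2 > 0" and "k1^2 - 2*k2*k0 \<ge> 0"
  shows "k1 = - k2 * quadratic_vertex k1 k2"
    and "k0 = k2 * (quadratic_vertex k1 k2 ^ 2 - quadratic_radius k0 k1 k2 ^ 2) / 2"
  using assms by (simp_all add: quadratic_vertex_def quadratic_radius_def power_divide power2_eq_square field_simps)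

lemma slice_coeffs_exist:
  assumes \<alpha>: "\<alpha> > 0" and k2: "k2 > 0" and k1: "k1 = - k2 * \<beta>" and k0: "k0 = k2 * (\<beta>^2 - \<alpha>^2) / 2"
    and lo: "cubic_poly r0 r1 r2 (\<beta> - \<alpha>) < 0" and hi: "cubic_poly r0 r1 r2 (\<beta> + \<alpha>) > 0"
  shows "\<exists>a b c. a > \<alpha>^2/6 + \<bar>b\<bar>*\<alpha>/2 \<and> r2 + c*k2 = \<beta> + b \<and>
    r1 + c*k1 = a - b*\<beta> - \<beta>^2/2 \<and> r0 + c*k0 = \<beta>^3/6 + b*\<beta>^2/2 - a*\<beta>"
proof -
  define p m where "p = cubic_poly r0 r1 r2 (\<beta> + \<alpha>) / \<alpha>" and "m = - cubic_poly r0 r1 r2 (\<beta> - \<alpha>) / \<alpha>"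
  define a b c where "a = \<alpha>^2/6 + (p + m)/2" and "b = (p - m)/\<alpha>" and "c = (\<beta> + b - r2)/k2"
  have "p > 0" "m > 0"
    using \<alpha> lo hi by (simp_all add: p_def m_def divide_neg_pos)
  moreover have "\<bar>b\<bar>*\<alpha> = \<bar>p - m\<bar>"
    using \<alpha> by (simp add: b_def abs_div)
  ultimately have "a > \<alpha>^2/6 + \<bar>b\<bar>*\<alpha>/2"
    by (simp add: a_def)
  moreover have "r2 + c*k2 = \<beta> + b"
    using k2 by (simp add: c_def)
  moreover have "r1 + c*k1 = a - b*\<beta> - \<beta>^2/2" "r0 + c*k0 = \<beta>^3/6 + b*\<beta>^2/2 - a*\<beta>"
    using \<alpha> k2 unfolding k1 k0 a_def b_def c_def p_def m_def cubic_poly_def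
    by (simp_all add: power2_eq_square power3_eq_cube field_simps)
  ultimately show ?thesis
    by blast
qed

lemma tendsto_cubic_poly [tendsto_intros]:
  "(a \<longlongrightarrow> A) F \<Longrightarrow> (b \<longlongrightarrow> B) F \<Longrightarrow> (c \<longlongrightarrow> C) F \<Longrightarrow> (f \<longlongrightarrow> t) F \<Longrightarrow>
    ((\<lambda>n. cubic_poly (a n) (b n) (c n) (f n)) \<longlongrightarrow> cubic_poly A B C t) F"
  unfolding cubic_poly_def by (intro tendsto_intros) simp_all

lemma tendsto_quadratic_poly [tendsto_intros]:
  "(a \<longlongrightarrow> A) F \<Longrightarrow> (b \<longlongrightarrow> B) F \<Longrightarrow> (c \<longlongrightarrow> C) F \<Longrightarrow> (f \<longlongrightarrow> t) F \<Longrightarrow>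
    ((\<lambda>n. quadratic_poly (a n) (b n) (c n) (f n)) \<longlongrightarrow> quadratic_poly A B C t) F"
  unfolding quadratic_poly_def by (intro tendsto_intros) simp_all

definition weakly_interlaced_at :: "(real \<Rightarrow> real) \<Rightarrow> (real \<Rightarrow> real) \<Rightarrow> real \<times> real \<times> real \<Rightarrow> bool" where
  "weakly_interlaced_at G H = (\<lambda>(u1, u2, u3). u1 \<le> u2 \<and> u2 \<le> u3 \<and> G u1 = 0 \<and> G u2 = 0 \<and> G u3 = 0 \<and>
     H u1 \<ge> 0 \<and> H u2 \<le> 0 \<and> H u3 \<ge> 0)"

lemma interlaced_imp_weakly_interlaced_at:
  assumes "interlaced G H"
  shows "\<exists>u. weakly_interlaced_at G H u"
proof -
  obtain u1 u2 u3 where "u1 < u2 \<and> u2 < u3 \<and> G u1 = 0 \<and> G u2 = 0 \<and> G u3 = 0 \<and>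
      H u1 > 0 \<and> H u2 < 0 \<and> H u3 > 0"
    using assms unfolding interlaced_def by blast
  then show ?thesis
    by (intro exI[of _ "(u1, u2, u3)"]) (simp add: weakly_interlaced_at_def)
qed

lemma interlacedI_weak:
  assumes "weakly_interlaced_at G H (u1, u2, u3)" and no_common_zero: "\<And>t. G t = 0 \<Longrightarrow> H t \<noteq> 0"
  shows "interlaced G H"
proof -
  have w: "u1 \<le> u2" "u2 \<le> u3" "G u1 = 0" "G u2 = 0" "G u3 = 0" "H u1 \<ge> 0" "H u2 \<le> 0" "H u3 \<ge> 0"
    using assms(1) by (simp_all add: weakly_interlaced_at_def)
  then have "H u1 > 0" "H u2 < 0" "H u3 > 0"
    using no_common_zero by force+
  moreover from this have "u1 < u2" "u2 < u3"
    using w(1,2) by (auto simp: order_le_less)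
  ultimately show ?thesis
    unfolding interlaced_def using w(3-5) by blast
qed

lemma weakly_interlaced_at_limit:
  assumes lim_U: "U \<longlonglongrightarrow> u" and U: "\<And>n. weakly_interlaced_at (G n) (H n) (U n)"
    and lim_G: "\<And>w t. w \<longlonglongrightarrow> t \<Longrightarrow> (\<lambda>n. G n (w n)) \<longlonglongrightarrow> G' t"
    and lim_H: "\<And>w t. w \<longlonglongrightarrow> t \<Longrightarrow> (\<lambda>n. H n (w n)) \<longlonglongrightarrow> H' t"
  shows "weakly_interlaced_at G' H' u"
proof -
  obtain v1 v2 v3 where v: "u = (v1, v2, v3)"
    by (rule prod_cases3)
  define u1 u2 u3 where "u1 = (\<lambda>n. fst (U n))" and "u2 = (\<lambda>n. fst (snd (U n)))"
    and "u3 = (\<lambda>n. snd (snd (U n)))"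
  have lim: "u1 \<longlonglongrightarrow> v1" "u2 \<longlonglongrightarrow> v2" "u3 \<longlonglongrightarrow> v3"
    using tendsto_fst[OF lim_U] tendsto_fst[OF tendsto_snd[OF lim_U]] tendsto_snd[OF tendsto_snd[OF lim_U]]
    by (simp_all add: u1_def u2_def u3_def v)
  have u: "u1 n \<le> u2 n" "u2 n \<le> u3 n" "G n (u1 n) = 0" "G n (u2 n) = 0" "G n (u3 n) = 0"
    "H n (u1 n) \<ge> 0" "H n (u2 n) \<le> 0" "H n (u3 n) \<ge> 0" for n
    using U[of n] by (simp_all add: weakly_interlaced_at_def u1_def u2_def u3_def split: prod.splits)
  have "v1 \<le> v2" "v2 \<le> v3"
    using LIMSEQ_le[OF lim(1) lim(2)] LIMSEQ_le[OF lim(2) lim(3)] u(1,2) by blast+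
  moreover have "G' v1 = 0" "G' v2 = 0" "G' v3 = 0"
    using lim_G[OF lim(1)] lim_G[OF lim(2)] lim_G[OF lim(3)] by (simp_all add: u LIMSEQ_const_iff)
  moreover have "H' v1 \<ge> 0" "H' v2 \<le> 0" "H' v3 \<ge> 0"
    using LIMSEQ_le_const[OF lim_H[OF lim(1)]] LIMSEQ_le_const2[OF lim_H[OF lim(2)]]
      LIMSEQ_le_const[OF lim_H[OF lim(3)]] u(6-8) by blast+
  ultimately show ?thesis
    by (simp add: weakly_interlaced_at_def v)
qed

lemma interlaced_limit:
  fixes r0 r1 r2 k0 k1 k2 :: "nat \<Rightarrow> real"
  assumes interlaced: "\<And>n. interlaced (cubic_poly (r0 n) (r1 n) (r2 n)) (quadratic_poly (k0 n) (k1 n) (k2 n))"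
    and lim: "r0 \<longlonglongrightarrow> R0" "r1 \<longlonglongrightarrow> R1" "r2 \<longlonglongrightarrow> R2" "k0 \<longlonglongrightarrow> K0" "k1 \<longlonglongrightarrow> K1" "k2 \<longlonglongrightarrow> K2"
    and no_common_zero: "\<And>t. cubic_poly R0 R1 R2 t = 0 \<Longrightarrow> quadratic_poly K0 K1 K2 t \<noteq> 0"
  shows "interlaced (cubic_poly R0 R1 R2) (quadratic_poly K0 K1 K2)"
proof -
  define G H where "G n = cubic_poly (r0 n) (r1 n) (r2 n)" and "H n = quadratic_poly (k0 n) (k1 n) (k2 n)" for n
  obtain U where U: "\<And>n. weakly_interlaced_at (G n) (H n) (U n)"
    using interlaced_imp_weakly_interlaced_at[OF interlaced] unfolding G_def H_def by metis
  have "convergent (\<lambda>n. cubic_root_bound (r0 n) (r1 n) (r2 n))"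
    unfolding convergent_def cubic_root_bound_def
    by (intro exI[of _ "cubic_root_bound R0 R1 R2"]) (simp add: cubic_root_bound_def tendsto_intros lim)
  then obtain K where K: "\<And>n. cubic_root_bound (r0 n) (r1 n) (r2 n) \<le> K"
    by (metis convergent_imp_Bseq BseqE abs_le_D1 real_norm_def)
  have bound: "t \<in> {-K..K}" if "G n t = 0" for n t
    using cubic_poly_root_bound[of "r0 n" "r1 n" "r2 n" t] K[of n] that unfolding G_def
    by (fastforce simp: abs_less_iff)
  have "U n \<in> {-K..K} \<times> {-K..K} \<times> {-K..K}" for n
  proof (cases "U n")
    case (fields a b c)
    then have "G n a = 0" "G n b = 0" "G n c = 0"
      using U[of n] by (simp_all add: weakly_interlaced_at_def)
    then show ?thesis
      using fields bound by simp
  qed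
  then have "range U \<subseteq> {-K..K} \<times> {-K..K} \<times> {-K..K}"
    by (simp add: image_subset_iff)
  then have "bounded (range U)"
    by (rule bounded_subset[rotated]) (intro bounded_Times bounded_closed_interval)
  then obtain u \<sigma> where \<sigma>: "strict_mono \<sigma>" and lim_U: "(U \<circ> \<sigma>) \<longlonglongrightarrow> u"
    by (metis bounded_imp_convergent_subsequence)
  have lim_\<sigma>: "(\<lambda>n. f (\<sigma> n)) \<longlonglongrightarrow> L" if "f \<longlonglongrightarrow> L" for f and L :: real
    using LIMSEQ_subseq_LIMSEQ[OF that \<sigma>] by (simp add: o_def)
  obtain v1 v2 v3 where v: "u = (v1, v2, v3)"
    by (rule prod_cases3)
  have "weakly_interlaced_at (cubic_poly R0 R1 R2) (quadratic_poly K0 K1 K2) u"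
  proof (rule weakly_interlaced_at_limit[OF lim_U])
    show "weakly_interlaced_at (G (\<sigma> n)) (H (\<sigma> n)) ((U \<circ> \<sigma>) n)" for n
      using U by simp
    show "(\<lambda>n. G (\<sigma> n) (w n)) \<longlonglongrightarrow> cubic_poly R0 R1 R2 t" if "w \<longlonglongrightarrow> t" for w t
      unfolding G_def using lim_\<sigma>[OF lim(1)] lim_\<sigma>[OF lim(2)] lim_\<sigma>[OF lim(3)] that
      by (rule tendsto_cubic_poly)
    show "(\<lambda>n. H (\<sigma> n) (w n)) \<longlonglongrightarrow> quadratic_poly K0 K1 K2 t" if "w \<longlonglongrightarrow> t" for w t
      unfolding H_def using lim_\<sigma>[OF lim(4)] lim_\<sigma>[OF lim(5)] lim_\<sigma>[OF lim(6)] that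
      by (rule tendsto_quadratic_poly)
  qed
  then show ?thesis
    using no_common_zero unfolding v by (rule interlacedI_weak)
qed

section \<open>Interlacing charges\<close>

definition moment_curve :: "real \<Rightarrow> real^4" where
  "moment_curve t = axis 0 1 + t *\<^sub>R axis 1 1 + (t^2/2) *\<^sub>R axis 2 1 + (t^3/6) *\<^sub>R axis 3 1"

lemma moment_curve_nth [simp]:
  "moment_curve t $ 0 = 1" "moment_curve t $ 1 = t" "moment_curve t $ 2 = t^2/2" "moment_curve t $ 3 = t^3/6"
  by (simp_all add: moment_curve_def axis_def)

lemma moment_curve_in_twisted_cubic: "moment_curve t \<in> twisted_cubic"
  unfolding twisted_cubic_def by (intro CollectI exI[of _ 1] exI[of _ t]) simp

lemma moment_curve_nonzero: "moment_curve t \<noteq> 0"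
  using moment_curve_nth(1)[of t] by (auto simp del: moment_curve_nth)

lemma axis3_in_twisted_cubic: "axis 3 1 \<in> twisted_cubic"
proof -
  have "root 3 6 ^ 3 = (6::real)"
    by (simp add: odd_real_root_pow)
  then show ?thesis
    unfolding twisted_cubic_def by (intro CollectI exI[of _ 0] exI[of _ "root 3 6"]) (simp add: axis_def)
qed

lemma VV_axis3_nonzero: "(Z :: charge) \<in> VV \<Longrightarrow> Z (axis 3 1) \<noteq> 0"
  using axis3_in_twisted_cubic unfolding VV_def by (auto simp: axis_eq_0_iff)

definition charge_coeff :: "charge \<Rightarrow> 4 \<Rightarrow> complex" where
  "charge_coeff Z j = - Z (axis j 1) / Z (axis 3 1)"

definition charge_cubic :: "charge \<Rightarrow> real \<Rightarrow> real" where
  "charge_cubic Z = cubic_poly (Re (charge_coeff Z 0)) (Re (charge_coeff Z 1)) (Re (charge_coeff Z 2))"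

definition charge_quadratic :: "charge \<Rightarrow> real \<Rightarrow> real" where
  "charge_quadratic Z = quadratic_poly (Im (charge_coeff Z 0)) (Im (charge_coeff Z 1)) (Im (charge_coeff Z 2))"

lemma charge_apply_axes:
  fixes Z :: charge
  shows "Z v = of_real (v$0) * Z (axis 0 1) + of_real (v$1) * Z (axis 1 1)
              + of_real (v$2) * Z (axis 2 1) + of_real (v$3) * Z (axis 3 1)"
proof -
  have "Z v = Z (\<Sum>i\<in>UNIV. v$i *\<^sub>R axis i 1)"
    using basis_expansion[of v] by (simp add: scalar_mult_eq_scaleR)
  also have "\<dots> = (\<Sum>i\<in>UNIV. v$i *\<^sub>R Z (axis i 1))"
    by (simp add: blinfun.sum_right blinfun.scaleR_right)
  also have "\<dots> = (\<Sum>i\<in>UNIV. of_real (v$i) * Z (axis i 1))"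
    by (simp add: scaleR_conv_of_real)
  finally show ?thesis
    unfolding UNIV_4 four_eq_zero by (simp add: ac_simps)
qed

lemma charge_apply_normalized:
  fixes Z :: charge
  assumes "Z (axis 3 1) \<noteq> 0"
  shows "- Z v / Z (axis 3 1) = of_real (v$0) * charge_coeff Z 0 + of_real (v$1) * charge_coeff Z 1
      + of_real (v$2) * charge_coeff Z 2 - of_real (v$3)"
  using assms by (subst charge_apply_axes) (simp add: charge_coeff_def field_simps)

lemma charge_moment_curve:
  fixes Z :: charge
  assumes "Z (axis 3 1) \<noteq> 0"
  shows "- Z (moment_curve t) / Z (axis 3 1) = Complex (charge_cubic Z t) (charge_quadratic Z t)"
  unfolding charge_apply_normalized[OF assms]
  by (simp add: charge_cubic_def charge_quadratic_def cubic_poly_def quadratic_poly_def complex_eq_iff algebra_simps)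

lemma VV_no_common_zero:
  assumes "Z \<in> VV" and "charge_cubic Z t = 0"
  shows "charge_quadratic Z t \<noteq> 0"
proof
  assume "charge_quadratic Z t = 0"
  then have "- Z (moment_curve t) / Z (axis 3 1) = 0"
    using assms VV_axis3_nonzero charge_moment_curve by (simp add: Complex_eq)
  then have "Z (moment_curve t) = 0"
    using VV_axis3_nonzero[OF assms(1)] by simp
  then show False
    using assms(1) moment_curve_in_twisted_cubic moment_curve_nonzero unfolding VV_def by blast
qed

definition interlacing_charges :: "charge set" where
  "interlacing_charges = {Z. blinfun_apply Z (axis 3 1) \<noteq> 0 \<and> interlaced (charge_cubic Z) (charge_quadratic Z)}"

lemma open_Collect_pos_on:
  fixes f :: "'a::topological_space \<Rightarrow> real"
  assumes "open U" and "continuous_on U f"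
  shows "open {x \<in> U. 0 < f x}"
proof -
  obtain A where "open A" "A \<inter> U = {x \<in> U. 0 < f x}"
    using open_Collect_positive[OF assms(2)] by blast
  then show ?thesis
    using assms(1) by (metis open_Int)
qed

lemma continuous_on_charge_coeff:
  "continuous_on {Z. blinfun_apply Z (axis 3 1) \<noteq> 0} (\<lambda>Z. charge_coeff Z j)"
  unfolding charge_coeff_def by (intro continuous_intros) auto

lemma open_interlacing_charges: "open interlacing_charges"
proof -
  define r k where "r j Z = Re (charge_coeff Z j)" and "k j Z = Im (charge_coeff Z j)" for j Z
  define \<beta> \<rho> where "\<beta> Z = quadratic_vertex (k 1 Z) (k 2 Z)"
    and "\<rho> Z = quadratic_radius (k 0 Z) (k 1 Z) (k 2 Z)" for Z
  define U0 where "U0 = {Z. blinfun_apply (Z :: charge) (axis 3 1) \<noteq> 0}"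
  define U1 where "U1 = {Z \<in> U0. 0 < k 2 Z}"
  define U2 where "U2 = {Z \<in> U1. 0 < k 1 Z ^ 2 - 2 * k 2 Z * k 0 Z}"
  define U3 where "U3 = {Z \<in> U2. 0 < - cubic_poly (r 0 Z) (r 1 Z) (r 2 Z) (\<beta> Z - \<rho> Z)}"
  define U4 where "U4 = {Z \<in> U3. 0 < cubic_poly (r 0 Z) (r 1 Z) (r 2 Z) (\<beta> Z + \<rho> Z)}"
  have "open U0"
    unfolding U0_def by (intro open_Collect_neq continuous_intros)
  have rk: "continuous_on U0 (r j)" "continuous_on U0 (k j)" for j
    unfolding r_def k_def U0_def by (intro continuous_intros continuous_on_charge_coeff)+
  have U_sub: "U4 \<subseteq> U3" "U3 \<subseteq> U2" "U2 \<subseteq> U1" "U1 \<subseteq> U0"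
    by (auto simp: U1_def U2_def U3_def U4_def)
  have \<beta>\<rho>: "continuous_on U1 \<beta>" "continuous_on U1 \<rho>"
    unfolding \<beta>_def \<rho>_def quadratic_vertex_def quadratic_radius_def
    using U_sub by (intro continuous_intros continuous_on_subset[OF rk(2)]
        continuous_on_compose2[OF continuous_on_real_sqrt]; force simp: U1_def)+
  have "open U1"
    unfolding U1_def by (intro open_Collect_pos_on \<open>open U0\<close> rk)
  moreover have "open U2"
    unfolding U2_def using U_sub
    by (intro open_Collect_pos_on \<open>open U1\<close> continuous_intros continuous_on_subset[OF rk(2)])
  moreover have "open U3"
    unfolding U3_def using U_sub
    by (intro open_Collect_pos_on \<open>open U2\<close> continuous_intros continuous_on_subset[OF rk(1)]
        continuous_on_subset[OF \<beta>\<rho>(1)] continuous_on_subset[OF \<beta>\<rho>(2)]) auto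
  moreover have "open U4"
    unfolding U4_def using U_sub
    by (intro open_Collect_pos_on \<open>open U3\<close> continuous_intros continuous_on_subset[OF rk(1)]
        continuous_on_subset[OF \<beta>\<rho>(1)] continuous_on_subset[OF \<beta>\<rho>(2)]) auto
  moreover have "interlacing_charges = U4"
    unfolding interlacing_charges_def charge_cubic_def charge_quadratic_def interlaced_iff_vertex
    by (auto simp: U0_def U1_def U2_def U3_def U4_def r_def k_def \<beta>_def \<rho>_def)
  ultimately show ?thesis
    by simp
qed

lemma tendsto_charge_coeff:
  fixes X :: "nat \<Rightarrow> charge"
  assumes "X \<longlonglongrightarrow> Z" and "Z (axis 3 1) \<noteq> 0"
  shows "(\<lambda>n. charge_coeff (X n) j) \<longlonglongrightarrow> charge_coeff Z j"
  unfolding charge_coeff_def using assms by (intro tendsto_intros blinfun.tendsto tendsto_const)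

lemma interlacing_charges_closed_in_VV:
  assumes "Z \<in> VV" and "Z \<in> closure interlacing_charges"
  shows "Z \<in> interlacing_charges"
proof -
  obtain X where X: "\<And>n. X n \<in> interlacing_charges" and lim: "X \<longlonglongrightarrow> Z"
    using assms(2) unfolding closure_sequential by blast
  have Z3: "Z (axis 3 1) \<noteq> 0"
    using assms(1) by (rule VV_axis3_nonzero)
  note coeff = tendsto_charge_coeff[OF lim Z3]
  have "interlaced (charge_cubic Z) (charge_quadratic Z)"
    unfolding charge_cubic_def charge_quadratic_def
    by (rule interlaced_limit[OF _ tendsto_Re[OF coeff] tendsto_Re[OF coeff] tendsto_Re[OF coeff]
          tendsto_Im[OF coeff] tendsto_Im[OF coeff] tendsto_Im[OF coeff]])
      (use X VV_no_common_zero[OF assms(1)] in \<open>auto simp: interlacing_charges_def charge_cubic_def charge_quadratic_def\<close>)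
  then show ?thesis
    using Z3 by (simp add: interlacing_charges_def)
qed

lemma Z_basic_in_interlacing_charges: "Z_basic \<in> interlacing_charges"
proof -
  have "sqrt (1/3) ^ 2 = (1/3 :: real)"
    by (simp add: power2_eq_square)
  then have coeff: "charge_coeff Z_basic 0 = Complex 0 (-1/6)" "charge_coeff Z_basic 1 = Complex (1/2) 0"
    "charge_coeff Z_basic 2 = Complex 0 1" and Z3: "Z_basic (axis 3 1) \<noteq> 0"
    by (simp_all add: charge_coeff_def Z_basic_eq slice_charge_axis Complex_eq)
  have "sqrt 3 ^ 3 = 3 * sqrt (3::real)"
    by (simp add: power3_eq_cube)
  then have "interlaced (charge_cubic Z_basic) (charge_quadratic Z_basic)"
    unfolding interlaced_def charge_cubic_def charge_quadratic_def coeff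
    by (intro exI[of _ "- sqrt 3"] exI[of _ 0] exI[of _ "sqrt 3"])
      (simp add: cubic_poly_def quadratic_poly_def)
  then show ?thesis
    using Z3 by (simp add: interlacing_charges_def)
qed

lemma PP_subset_interlacing_charges: "PP \<subseteq> interlacing_charges"
proof -
  have PP_VV: "PP \<subseteq> VV"
    unfolding PP_def by (rule connected_component_subset)
  have "openin (top_of_set PP) (PP \<inter> interlacing_charges)"
    by (rule openin_open_Int[OF open_interlacing_charges])
  moreover have "PP \<inter> interlacing_charges = PP \<inter> closure interlacing_charges"
    using PP_VV interlacing_charges_closed_in_VV closure_subset by blast
  then have "closedin (top_of_set PP) (PP \<inter> interlacing_charges)"
    by (simp add: closedin_closed_Int)
  moreover have "Z_basic \<in> PP \<inter> interlacing_charges"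
    using Z_basic_in_interlacing_charges Z_basic_in_SS SS_subset_VV unfolding PP_def by auto
  ultimately show ?thesis
    using connected_connected_component[of VV Z_basic] unfolding PP_def connected_clopen by blast
qed

lemma gl2_act_normalized_charge:
  fixes Z :: charge
  assumes "Z (axis 3 1) \<noteq> 0"
  shows "gl2_act (gl2_matrix 1 c 0 d) (- Z v / Z (axis 3 1)) = Complex
      (v$0 * (Re (charge_coeff Z 0) + c * Im (charge_coeff Z 0)) + v$1 * (Re (charge_coeff Z 1) + c * Im (charge_coeff Z 1))
        + v$2 * (Re (charge_coeff Z 2) + c * Im (charge_coeff Z 2)) - v$3)
      (d * (v$0 * Im (charge_coeff Z 0) + v$1 * Im (charge_coeff Z 1) + v$2 * Im (charge_coeff Z 2)))"
  unfolding charge_apply_normalized[OF assms] gl2_act_gl2_matrix by (simp add: algebra_simps)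

lemma interlacing_charge_orbit_meets_SS:
  assumes "Z \<in> interlacing_charges"
  shows "\<exists>W\<in>SS. in_GL2_orbit W Z"
proof -
  define r k where "r j = Re (charge_coeff Z j)" and "k j = Im (charge_coeff Z j)" for j
  define \<beta> \<alpha> where "\<beta> = quadratic_vertex (k 1) (k 2)" and "\<alpha> = quadratic_radius (k 0) (k 1) (k 2)"
  have Z3: "Z (axis 3 1) \<noteq> 0"
    and "interlaced (cubic_poly (r 0) (r 1) (r 2)) (quadratic_poly (k 0) (k 1) (k 2))"
    using assms by (simp_all add: interlacing_charges_def charge_cubic_def charge_quadratic_def r_def k_def)
  then have k2: "k 2 > 0" and disc: "k 1 ^ 2 - 2 * k 2 * k 0 > 0"
    and lo: "cubic_poly (r 0) (r 1) (r 2) (\<beta> - \<alpha>) < 0" and hi: "cubic_poly (r 0) (r 1) (r 2) (\<beta> + \<alpha>) > 0"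
    by (simp_all add: interlaced_iff_vertex \<beta>_def \<alpha>_def)
  have \<alpha>: "\<alpha> > 0"
    using k2 disc by (simp add: \<alpha>_def quadratic_radius_def)
  have k10: "k 1 = - k 2 * \<beta>" "k 0 = k 2 * (\<beta>^2 - \<alpha>^2) / 2"
    using quadratic_coeffs_vertex[OF k2 less_imp_le[OF disc]] by (simp_all add: \<beta>_def \<alpha>_def)
  obtain a b c where a: "a > \<alpha>^2/6 + \<bar>b\<bar>*\<alpha>/2" and coeffs: "r 2 + c * k 2 = \<beta> + b"
    "r 1 + c * k 1 = a - b*\<beta> - \<beta>^2/2" "r 0 + c * k 0 = \<beta>^3/6 + b*\<beta>^2/2 - a*\<beta>"
    using slice_coeffs_exist[OF \<alpha> k2 k10 lo hi] by blast
  define \<mu> where "\<mu> = - 1 / Z (axis 3 1)"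
  define g where "g = gl2_matrix 1 c 0 (1 / k 2) ** gl2_matrix (Re \<mu>) (- Im \<mu>) (Im \<mu>) (Re \<mu>)"
  have "det g > 0"
    using k2 det_gl2_complex_mult[of \<mu>] Z3 by (simp add: g_def det_mul det_gl2_matrix \<mu>_def)
  moreover have "gl2_act g (Z v) = slice_charge \<alpha> \<beta> a b v" for v
  proof -
    have "gl2_act g (Z v) = gl2_act (gl2_matrix 1 c 0 (1 / k 2)) (- Z v / Z (axis 3 1))"
      unfolding g_def gl2_act_mult gl2_act_complex_mult \<mu>_def by simp
    also have "\<dots> = Complex (v$0 * (r 0 + c * k 0) + v$1 * (r 1 + c * k 1) + v$2 * (r 2 + c * k 2) - v$3)
        (v$0 * (k 0 / k 2) + v$1 * (k 1 / k 2) + v$2 * (k 2 / k 2))"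
      unfolding gl2_act_normalized_charge[OF Z3] r_def k_def by (simp add: algebra_simps)
    also have "\<dots> = slice_charge \<alpha> \<beta> a b v"
      unfolding coeffs using k2 
      by (simp add: k10 slice_charge_apply eb1_def eb2_def eb3_def complex_eq_iff field_simps)
    finally show ?thesis .
  qed
  ultimately show ?thesis
    using slice_charge_in_SS[OF \<alpha> a] unfolding in_GL2_orbit_def by metis
qed

theorem lemma8p3:
  shows "SS \<subseteq> PP \<and> (\<forall>Z\<in>PP. \<exists>!W. W \<in> SS \<and> in_GL2_orbit W Z) \<and> simply_connected SS"
proof (intro conjI ballI)
  show "SS \<subseteq> PP"
    unfolding PP_def using Z_basic_in_SS simply_connected_imp_connected[OF simply_connected_SS] SS_subset_VV
    by (rule connected_component_maximal)
  show "simply_connected SS"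
    by (rule simply_connected_SS)
  fix Z
  assume "Z \<in> PP"
  then obtain W where "W \<in> SS" "in_GL2_orbit W Z"
    using PP_subset_interlacing_charges interlacing_charge_orbit_meets_SS by blast
  then show "\<exists>!W. W \<in> SS \<and> in_GL2_orbit W Z"
    using SS_orbit_unique by blast
qed

end
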